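(* Let $E/\mathbb{Q}$ be an elliptic curve of conductor $N$, $p$ a prime of good supersingular reduction, and $\chi$ the trivial or a quadratic Dirichlet character. Let $Q$ be the largest divisor of $N$ coprime to $p$ and to the conductor of $\chi$. Suppose $L_p^\sharp(E,\chi,T)$ and $L_p^\flat(E,\chi,T)$ are nonzero and write their Taylor expansions at $T=0$ as $$L_p^\sharp(E,\chi,T)=a_\sharp T^{m_\sharp}+b_\sharp T^{m_\sharp+1}+\cdots,\qquad L_p^\flat(E,\chi,T)=a_\flat T^{m_\flat}+b_\flat T^{m_\flat+1}+\cdots$$ with $a_\sharp,a_\flat\neq0$. Then $$b_\sharp=-\frac{a_\sharp}{2}\big(\log_\gamma(Q)+m_\sharp\big),\qquad b_\flat=-\frac{a_\flat}{2}\big(\log_\gamma(Q)+m_\flat\big).$$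
   Context: Notation: $\gamma$ is a topological generator of $\mathrm{Gal}(\mathbb{Q}_\infty/\mathbb{Q})\cong\mathbb{Z}_p$, $\kappa$ the cyclotomic character, $\langle x\rangle$ the projection of $x\in\mathbb{Z}_p^\times$ to $1+p\mathbb{Z}_p$ ($1+4\mathbb{Z}_2$ if $p=2$), $\log_\gamma(x)=\log\langle x\rangle/\log\kappa(\gamma)$, and $(1+T)^a=\sum_n\binom{a}{n}T^n$ for $a\in\mathbb{Z}_p$. For a Dirichlet character $\psi$, $c_Q\in\{\pm1\}$ is defined by $f|_{\left(\begin{smallmatrix}0&-1\\Q&0\end{smallmatrix}\right)}=c_Qf$, $f$ the newform of $E$. The $\sharp/\flat$ $p$-adic $L$-functions $L_p^\sharp(E,\psi,T),L_p^\flat(E,\psi,T)$ (Sprung's completed versions) are integral power series satisfying $(L_\alpha(E,\psi,T),L_\beta(E,\psi,T))=(L_p^\sharp,L_p^\flat)\mathcal{L}og_{\alpha,\beta}(1+T)$ with $L_\alpha,L_\beta$ the Amice–Vélu–Višik $p$-adic $L$-functions, and the functional equation, for $\bullet\in\{\sharp,\flat\}$, $$L_p^{\bullet}(E,\psi,T)=-(1+T)^{-\log_\gamma(Q)}\,\overline{\psi}(-Q)\,c_Q\,L_p^{\bullet}\Big(E,\overline{\psi},\tfrac{1}{1+T}-1\Big).$$ *)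

theory Defs
  imports "HOL-Computational_Algebra.Formal_Power_Series"
begin

text \<open>The coefficient field K (a characteristic-zero field, standing
for C_p) is a type variable. For lam in K, the series (1+T)^lam is the binomial series
fps_binomial lam (coefficients lam gchoose n). The substitution T := 1/(1+T) - 1 is
composition with the power series inverse (1 + X) - 1 (which has zero constant term).\<close>

definition subst_series :: "'a::field fps" where
  "subst_series = inverse (1 + fps_X) - 1"

text \<open>Functional equation of the sharp/flat p-adic L-function for a real character
chi (so chi-bar = chi):
  F(T) = - (1+T)^(-lam) * chi(-Q) * c_Q * F(1/(1+T) - 1),  lam = log_gamma(Q).\<close>

definition satisfies_FE :: "'a::field_char_0 \<Rightarrow> 'a \<Rightarrow> 'a \<Rightarrow> 'a fps \<Rightarrow> bool" where
  "satisfies_FE lam chiQ cQ F \<longleftrightarrow>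
     F = - (fps_binomial (- lam) * fps_const (chiQ * cQ) * (F oo subst_series))"

end

theory Submission
  imports Defs
begin

text \<open>Since 1/(1+T) - 1 = -T (1+T)^(-1), dividing a solution F of the functional equation by
T^m, m its order of vanishing, gives a series G with G(0) \<noteq> 0 solving an equation of the same
shape with \<lambda> replaced by \<lambda> + m. For such G = \<epsilon> (1+T)^(-\<lambda>) G(1/(1+T) - 1), comparing constant
terms forces \<epsilon> = 1, and as 1/(1+T) - 1 = -T mod T^2, comparing linear terms gives
G_1 = -G_1 - \<lambda> G_0.\<close>

unbundle fps_syntax

lemma subst_series_eq: "(subst_series :: 'a::field_char_0 fps) = - (fps_X * fps_binomial (- 1))"
proof -
  have "(1 + fps_X) * inverse (1 + fps_X :: 'a fps) = 1"
    by (simp add: inverse_mult_eq_1')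
  then show ?thesis
    unfolding subst_series_def fps_binomial_minus_one by (simp add: algebra_simps)
qed

lemma subst_series_power:
  "(subst_series :: 'a::field_char_0 fps) ^ m = (- 1) ^ m * fps_binomial (- of_nat m) * fps_X ^ m"
proof -
  have "(subst_series :: 'a fps) ^ m = (- 1) ^ m * (fps_X * fps_binomial (- 1)) ^ m"
    unfolding subst_series_eq by (rule power_minus)
  then show ?thesis
    by (simp add: power_mult_distrib fps_binomial_power mult_ac)
qed

lemma subst_series_nth_0: "(subst_series :: 'a::field fps) $ 0 = 0"
  by (simp add: subst_series_def)

lemma fps_compose_subst_series_nth_1: "(F oo subst_series) $ 1 = - (F $ 1 :: 'a::field)"
  by (simp add: fps_compose_nth subst_series_def fps_inverse_fps_X_plus1)

lemma fps_compose_subst_series_decompose: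
  fixes F :: "'a::field_char_0 fps"
  defines "m \<equiv> subdegree F"
  shows "F oo subst_series
           = (- 1) ^ m * fps_binomial (- of_nat m) * (fps_shift m F oo subst_series) * fps_X ^ m"
proof -
  have "F oo subst_series = (fps_shift m F * fps_X ^ m) oo subst_series"
    unfolding m_def by (simp flip: subdegree_decompose)
  also have "\<dots> = (fps_shift m F oo subst_series) * subst_series ^ m"
    by (simp add: fps_compose_mult_distrib subst_series_nth_0 flip: fps_compose_power)
  finally show ?thesis by (simp add: subst_series_power ac_simps)
qed

lemma satisfies_FE_fps_shift_subdegree:
  fixes F :: "'a::field_char_0 fps"
  assumes "satisfies_FE lam chi c F"
  defines "m \<equiv> subdegree F"
  shows "satisfies_FE (lam + of_nat m) ((- 1) ^ m * chi) c (fps_shift m F)"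
proof -
  define G where "G = fps_shift m F"
  have binomial: "fps_binomial (- lam) * fps_binomial (- of_nat m)
                    = fps_binomial (- (lam + of_nat m) :: 'a)"
    by (simp add: fps_binomial_add_mult[symmetric])
  have sign: "(- 1) ^ m * fps_const (chi * c) = fps_const ((- 1) ^ m * chi * c)"
  proof -
    have "(- 1 :: 'a fps) = fps_const (- 1)"
      by (metis fps_const_1_eq_1 fps_const_neg)
    then show ?thesis
      by (simp only: fps_const_power fps_const_mult mult.assoc)
  qed
  have "G * fps_X ^ m = F"
    unfolding G_def m_def by (simp flip: subdegree_decompose)
  also have "\<dots> = - (fps_binomial (- lam) * fps_const (chi * c) * (F oo subst_series))"
    using assms unfolding satisfies_FE_def by simp
  also have "\<dots> = - ((fps_binomial (- lam) * fps_binomial (- of_nat m))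
                      * ((- 1) ^ m * fps_const (chi * c)) * (G oo subst_series)) * fps_X ^ m"
    unfolding fps_compose_subst_series_decompose[of F] G_def m_def
    by (simp only: mult_ac minus_mult_left minus_mult_right)
  also have "\<dots> = - (fps_binomial (- (lam + of_nat m)) * fps_const ((- 1) ^ m * chi * c)
                      * (G oo subst_series)) * fps_X ^ m"
    unfolding binomial sign ..
  finally have "G = - (fps_binomial (- (lam + of_nat m)) * fps_const ((- 1) ^ m * chi * c)
                      * (G oo subst_series))"
    by (simp only: mult_right_cancel[OF power_not_zero[OF fps_X_neq_zero]])
  then show ?thesis
    unfolding satisfies_FE_def G_def .
qed

lemma satisfies_FE_nth_1:
  fixes G :: "'a::field_char_0 fps"
  assumes FE: "satisfies_FE lam chi c G" and nz: "G $ 0 \<noteq> 0"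
  shows "G $ 1 = - (G $ 0) / 2 * lam"
proof -
  have FE_nth: "G $ n = - (chi * c) * (fps_binomial (- lam) * (G oo subst_series)) $ n" for n
  proof -
    have "G = - (fps_const (chi * c) * (fps_binomial (- lam) * (G oo subst_series)))"
      using FE unfolding satisfies_FE_def by (simp only: mult_ac)
    then show ?thesis
      by (metis fps_neg_nth fps_mult_left_const_nth minus_mult_left)
  qed
  have "G $ 0 = - (chi * c) * G $ 0"
    using FE_nth[of 0] by simp
  with nz have sign: "- (chi * c) = 1"
    by (metis mult_cancel_right1)
  have "G $ 1 = (fps_binomial (- lam) * (G oo subst_series)) $ 1"
    using FE_nth[of 1] sign by simp
  also have "\<dots> = - G $ 1 - lam * G $ 0"
    using fps_compose_subst_series_nth_1[of G] by (simp add: fps_mult_nth_1)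
  finally have "2 * G $ 1 = - (G $ 0) * lam"
    by (simp add: algebra_simps eq_neg_iff_add_eq_0)
  then show ?thesis
    by (simp add: field_simps)
qed

lemma satisfies_FE_nth_Suc_subdegree:
  fixes F :: "'a::field_char_0 fps"
  assumes "satisfies_FE lam chi c F" and "F \<noteq> 0"
  shows "F $ (subdegree F + 1) = - (F $ subdegree F) / 2 * (lam + of_nat (subdegree F))"
  using satisfies_FE_nth_1[OF satisfies_FE_fps_shift_subdegree[OF assms(1)]] assms(2)
  by simp

theorem theorem4p4:
  fixes Lsharp Lflat :: "'a::field_char_0 fps"
    and logQ chiQ cQ :: "'a"
  assumes chiQ: "chiQ = 1 \<or> chiQ = -1"
    and cQ: "cQ = 1 \<or> cQ = -1"
    and fe_sharp: "satisfies_FE logQ chiQ cQ Lsharp"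
    and fe_flat: "satisfies_FE logQ chiQ cQ Lflat"
    and nz_sharp: "Lsharp \<noteq> 0"
    and nz_flat: "Lflat \<noteq> 0"
  shows "fps_nth Lsharp (subdegree Lsharp + 1)
           = - (fps_nth Lsharp (subdegree Lsharp)) / 2 * (logQ + of_nat (subdegree Lsharp))
       \<and> fps_nth Lflat (subdegree Lflat + 1)
           = - (fps_nth Lflat (subdegree Lflat)) / 2 * (logQ + of_nat (subdegree Lflat))"
  using satisfies_FE_nth_Suc_subdegree[OF fe_sharp nz_sharp]
    satisfies_FE_nth_Suc_subdegree[OF fe_flat nz_flat]
  by simp

end
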